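(* For each $n$, let $G_n$ be a $d$-regular graph on $n$ vertices with $d = d_n = \omega(\sqrt{n})$. Let $\widehat{G}_n$ be the cone over $G_n$, obtained by adding a new (conical) vertex adjacent to all vertices of $G_n$, and let $\widehat{G}_n(P_\infty)$ be the infinite graph obtained by attaching an infinite one-sided path to the conical vertex (i.e. identifying the conical vertex with the first vertex of the path $P_\infty$). Let $\mathcal{H}_0$ be the adjacency operator of $\widehat{G}_n(P_\infty)$ on $\ell^2$ of its vertex set. Let $z_1\in\ell^2$ be the natural embedding of the normalized principal eigenvector of $G_n$ (i.e. $z_1 = n^{-1/2}\sum_{v\in V(G_n)} e_v$, zero elsewhere). Suppose that there are a time $t_0$, a real $\gamma$, a unit complex number $\zeta$, and a vertex $w$ of $G_n$ such that \[ \left\| e^{-it_0(\mathcal{H}_0+\gamma P_w)} z_1 - \zeta e_w\right\|^2 = o(1), \] where $P_w$ is the orthogonal projection onto $\mathrm{span}\{e_w\}$. Let $\epsilon_1 = |\langle e_w, z_1\rangle|$. If $1/(\gamma\epsilon_1) = o(1)$, then $\gamma t_0 = \Omega(1/\epsilon_1)$.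
   Context: All asymptotic notation refers to $n\to\infty$: $g=o(f)$ means $g/f\to0$, $g=\omega(f)$ means $g/f\to\infty$, $g=\Omega(f)$ means $g/f$ is bounded below by a positive constant. The quantities $t_0,\gamma,\zeta,w$ may depend on $n$. The inner product is $\langle x,y\rangle=\sum_u \overline{x_u}y_u$. *)

theory Defs
  imports "HOL-Analysis.Analysis" "HOL-Library.Landau_Symbols"
begin

definition regular_graph :: "nat \<Rightarrow> nat \<Rightarrow> (nat \<Rightarrow> nat \<Rightarrow> bool) \<Rightarrow> bool" where
  "regular_graph n d E \<longleftrightarrow>
     (\<forall>u v. E u v \<longrightarrow> u < n \<and> v < n) \<and> (\<forall>u v. E u v \<longrightarrow> E v u) \<and>
     (\<forall>u. \<not> E u u) \<and> (\<forall>u<n. card {v. E u v} = d)"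

text \<open>Adjacency of the infinite graph  hat G_n(P_infinity):  vertices 0..<n are those of
  G_n, vertex n is the conical vertex (= first vertex of the path), and vertex n+k
  is the k-th vertex of the one-sided infinite path.\<close>
definition cone_path_adj :: "(nat \<Rightarrow> nat \<Rightarrow> bool) \<Rightarrow> nat \<Rightarrow> nat \<Rightarrow> nat \<Rightarrow> bool" where
  "cone_path_adj E n u v \<longleftrightarrow>
     (u < n \<and> v < n \<and> E u v) \<or> (u < n \<and> v = n) \<or> (u = n \<and> v < n) \<or>
     (n \<le> u \<and> n \<le> v \<and> (u = Suc v \<or> v = Suc u))"

definition basis :: "nat \<Rightarrow> nat \<Rightarrow> complex" where
  "basis w u = (if u = w then 1 else 0)"

definition l2_inner :: "(nat \<Rightarrow> complex) \<Rightarrow> (nat \<Rightarrow> complex) \<Rightarrow> complex" where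
  "l2_inner f g = infsum (\<lambda>u. cnj (f u) * g u) UNIV"

definition l2norm_sq :: "(nat \<Rightarrow> complex) \<Rightarrow> real" where
  "l2norm_sq f = infsum (\<lambda>u. (norm (f u))^2) UNIV"

definition adj_op :: "(nat \<Rightarrow> nat \<Rightarrow> bool) \<Rightarrow> (nat \<Rightarrow> complex) \<Rightarrow> nat \<Rightarrow> complex" where
  "adj_op A f u = (\<Sum>v\<in>{v. A u v}. f v)"

definition proj :: "nat \<Rightarrow> (nat \<Rightarrow> complex) \<Rightarrow> nat \<Rightarrow> complex" where
  "proj w f u = l2_inner (basis w) f * basis w u"

definition ham :: "(nat \<Rightarrow> nat \<Rightarrow> bool) \<Rightarrow> nat \<Rightarrow> real \<Rightarrow> nat \<Rightarrow> (nat \<Rightarrow> complex) \<Rightarrow> nat \<Rightarrow> complex" where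
  "ham E n \<gamma> w f u = adj_op (cone_path_adj E n) f u + complex_of_real \<gamma> * proj w f u"

text \<open>exp(-i t H) f, given coordinatewise by the (norm-convergent, hence coordinatewise
  convergent) exponential series  sum_k (-i t)^k / k! H^k f.\<close>
definition evol :: "((nat \<Rightarrow> complex) \<Rightarrow> nat \<Rightarrow> complex) \<Rightarrow> real \<Rightarrow> (nat \<Rightarrow> complex) \<Rightarrow> nat \<Rightarrow> complex" where
  "evol H t f u = (\<Sum>k. ((- \<i> * complex_of_real t) ^ k / fact k) * (H ^^ k) f u)"

definition z1 :: "nat \<Rightarrow> nat \<Rightarrow> complex" where
  "z1 n u = (if u < n then complex_of_real (1 / sqrt (real n)) else 0)"

definition eps1 :: "nat \<Rightarrow> nat \<Rightarrow> real" where
  "eps1 n w = norm (l2_inner (basis w) (z1 n))"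

end

(*
  Write a = (exp (-i t0 H) z1)(w) with H = H0 + gamma P_w.  Closeness to zeta e_w forces
  |a| >= 3/4.  Without the potential all vertices of the regular graph are equivalent, so
  unitarity gives |a|^2 <= 1/n; hence gamma <> 0, and the hypothesis on gamma eps1 gives
  |gamma| >= sqrt n = 1/eps1.
  The Perron vector phi = z1 + beta e_c of the finite cone (c the apex, beta <= sqrt n / d,
  which is small) satisfies H phi = lambda phi + rho with |rho|^2 = beta^2 + gamma^2/n, at most
  4 gamma^2/n.  By Duhamel's formula and unitarity |a| <= beta + 1/sqrt n + |t0| |rho|, so
  1/4 <= 2 |t0 gamma| / sqrt n.

  Its unitarity on finitely
  supported vectors comes from finite propagation speed: the N-th partial sum is finitely
  supported with squared norm sum_{j,k<N} conj (c_j) c_k <x, H^(j+k) x>, which tends to |x|^2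
  because the coefficients of exp (i t) exp (-i t) vanish in positive degree.
*)
theory Submission
  imports Defs
begin

definition evol_coeff :: "real \<Rightarrow> nat \<Rightarrow> complex" where
  "evol_coeff t k = (- \<i> * complex_of_real t) ^ k / fact k"

lemma norm_evol_coeff: "norm (evol_coeff t k) = \<bar>t\<bar> ^ k / fact k"
  by (simp add: evol_coeff_def norm_divide norm_power norm_mult)

lemma evol_eq_suminf_coeff: "evol H t x u = (\<Sum>k. evol_coeff t k * (H ^^ k) x u)"
  by (simp add: evol_def evol_coeff_def)

text \<open>\<open>exp (i t) exp (- i t) = 1\<close>, coefficientwise.\<close>
lemma evol_coeff_conj_convolution:
  "(\<Sum>j\<le>p. cnj (evol_coeff t j) * evol_coeff t (p - j)) = (if p = 0 then 1 else 0)"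
proof -
  let ?a = "\<i> * complex_of_real t" and ?b = "- \<i> * complex_of_real t"
  have "(\<Sum>j\<le>p. cnj (evol_coeff t j) * evol_coeff t (p - j))
      = (\<Sum>j\<le>p. ?a ^ j /\<^sub>R fact j * (?b ^ (p - j) /\<^sub>R fact (p - j)))"
    by (simp add: evol_coeff_def scaleR_conv_of_real field_simps)
  also have "\<dots> = (?a + ?b) ^ p /\<^sub>R fact p"
    by (rule exp_series_add_commuting[symmetric]) (simp add: algebra_simps)
  finally show ?thesis by (cases p) simp_all
qed

lemma sum_triangle_evol_coeff:
  assumes "0 < N"
  shows "(\<Sum>(j,k)\<in>{(j,k). j + k < N}. cnj (evol_coeff t j) * evol_coeff t k * m (j + k)) = m 0"
proof -
  have "(\<Sum>(j,k)\<in>{(j,k). j + k < N}. cnj (evol_coeff t j) * evol_coeff t k * m (j + k))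
      = (\<Sum>p<N. m p * (\<Sum>j\<le>p. cnj (evol_coeff t j) * evol_coeff t (p - j)))"
    by (subst sum.triangle_reindex) (simp add: sum_distrib_left mult_ac)
  also have "\<dots> = m 0"
    using assms by (simp add: evol_coeff_conj_convolution if_distrib cong: if_cong)
  finally show ?thesis .
qed

lemma norm_le_sum_lessThan:
  fixes x :: "nat \<Rightarrow> 'a::real_normed_vector"
  assumes "\<And>u. M \<le> u \<Longrightarrow> x u = 0"
  shows "norm (x v) \<le> (\<Sum>u<M. norm (x u))"
  using assms[of v] by (cases "v < M") (auto intro: member_le_sum sum_nonneg)

lemma sq_norm_diff_le:
  fixes a b :: "'a::real_normed_vector"
  shows "(norm (a - b))\<^sup>2 \<le> 2 * (norm a)\<^sup>2 + 2 * (norm b)\<^sup>2"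
proof -
  have "(norm (a - b))\<^sup>2 \<le> (norm a + norm b)\<^sup>2"
    by (intro power_mono norm_triangle_ineq4) simp
  then show ?thesis
    using zero_le_power2[of "norm a - norm b"] unfolding power2_diff power2_sum by linarith
qed

lemma LIMSEQ_sum_upper_half_0:
  fixes e :: "nat \<Rightarrow> real"
  assumes "summable e"
  shows "(\<lambda>N. \<Sum>j\<in>{N div 2..<N}. e j) \<longlonglongrightarrow> 0"
proof -
  have lim: "(\<lambda>N. \<Sum>j<N. e j) \<longlonglongrightarrow> suminf e" by (rule summable_LIMSEQ[OF assms])
  have "filterlim (\<lambda>N::nat. N div 2) at_top at_top"
    unfolding filterlim_at_top eventually_at_top_linorder
    by (metis div_le_mono nonzero_mult_div_cancel_left zero_neq_numeral)
  then have "(\<lambda>N. \<Sum>j<N div 2. e j) \<longlonglongrightarrow> suminf e"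
    by (rule filterlim_compose[OF lim])
  from tendsto_diff[OF lim this] have "(\<lambda>N. (\<Sum>j<N. e j) - (\<Sum>j<N div 2. e j)) \<longlonglongrightarrow> 0"
    by simp
  moreover have "(\<Sum>j\<in>{N div 2..<N}. e j) = (\<Sum>j<N. e j) - (\<Sum>j<N div 2. e j)" for N
    using sum_diff_nat_ivl[of 0 "N div 2" N e] by (simp add: atLeast0LessThan)
  ultimately show ?thesis by simp
qed

text \<open>Off the triangle \<open>j + k < N\<close>, one of \<open>j\<close>, \<open>k\<close> is at least \<open>N div 2\<close>.\<close>
lemma norm_sum_square_minus_triangle_le:
  fixes g :: "nat \<Rightarrow> nat \<Rightarrow> 'a::real_normed_vector"
  assumes g: "\<And>j k. norm (g j k) \<le> K * (e j * e k)" and K: "0 \<le> K"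
    and e: "\<And>j. 0 \<le> e j" "summable e"
  shows "norm (\<Sum>(j,k)\<in>{..<N}\<times>{..<N} - {(j,k). j + k < N}. g j k)
    \<le> 2 * K * suminf e * (\<Sum>j\<in>{N div 2..<N}. e j)"
proof -
  let ?f = "\<lambda>(j,k). K * (e j * e k)" and ?\<tau> = "\<Sum>j\<in>{N div 2..<N}. e j"
  let ?A = "{N div 2..<N}\<times>{..<N}" and ?B = "{..<N}\<times>{N div 2..<N}"
  have f_nonneg: "0 \<le> ?f p" for p using K e by (cases p) auto
  have partial_le: "(\<Sum>k<N. e k) \<le> suminf e" by (rule sum_le_suminf) (use e in auto)
  have \<tau>_nonneg: "0 \<le> ?\<tau>" by (rule sum_nonneg) (use e in auto)
  have "norm (\<Sum>(j,k)\<in>{..<N}\<times>{..<N} - {(j,k). j + k < N}. g j k)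
      \<le> (\<Sum>p\<in>{..<N}\<times>{..<N} - {(j,k). j + k < N}. ?f p)"
    by (rule sum_norm_le) (auto simp: g)
  also have "\<dots> \<le> (\<Sum>p\<in>?A \<union> ?B. ?f p)"
    by (rule sum_mono2) (use f_nonneg in auto)
  also have "\<dots> \<le> (\<Sum>p\<in>?A. ?f p) + (\<Sum>p\<in>?B. ?f p)"
    using sum_Un[of ?A ?B ?f] sum_nonneg[of "?A \<inter> ?B" ?f] f_nonneg by simp
  also have "\<dots> = 2 * K * ?\<tau> * (\<Sum>k<N. e k)"
    by (simp add: sum.cartesian_product[symmetric] sum_product sum_distrib_left mult_ac
        sum.swap[of _ "{..<N}"])
  also have "\<dots> \<le> 2 * K * ?\<tau> * suminf e"
    using K \<tau>_nonneg partial_le by (intro mult_left_mono) auto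
  finally show ?thesis by (simp add: algebra_simps)
qed

lemma LIMSEQ_sum_square_minus_triangle_0:
  fixes g :: "nat \<Rightarrow> nat \<Rightarrow> 'a::real_normed_vector"
  assumes g: "\<And>j k. norm (g j k) \<le> K * (e j * e k)" and K: "0 \<le> K"
    and e: "\<And>j. 0 \<le> e j" "summable e"
  shows "(\<lambda>N. (\<Sum>(j,k)\<in>{..<N}\<times>{..<N}. g j k) - (\<Sum>(j,k)\<in>{(j,k). j + k < N}. g j k)) \<longlonglongrightarrow> 0"
proof (rule Lim_null_comparison)
  have "(\<Sum>(j,k)\<in>{..<N}\<times>{..<N}. g j k) - (\<Sum>(j,k)\<in>{(j,k). j + k < N}. g j k)
      = (\<Sum>(j,k)\<in>{..<N}\<times>{..<N} - {(j,k). j + k < N}. g j k)" for N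
    by (subst sum.subset_diff[of "{(j,k). j + k < N}"]) auto
  then show "\<forall>\<^sub>F N in sequentially. norm ((\<Sum>(j,k)\<in>{..<N}\<times>{..<N}. g j k)
      - (\<Sum>(j,k)\<in>{(j,k). j + k < N}. g j k)) \<le> 2 * K * suminf e * (\<Sum>j\<in>{N div 2..<N}. e j)"
    using norm_sum_square_minus_triangle_le[OF assms] by simp
  show "(\<lambda>N. 2 * K * suminf e * (\<Sum>j\<in>{N div 2..<N}. e j)) \<longlonglongrightarrow> 0"
    by (rule tendsto_mult_right_zero[OF LIMSEQ_sum_upper_half_0[OF e(2)]])
qed

text \<open>The properties of \<open>H\<^sub>0 + \<gamma> P\<^sub>w\<close> used in the argument, in place of self-adjointness on
  \<open>\<ell>\<^sup>2\<close>: since \<open>H\<close> spreads supports beyond \<open>M0\<close> by one site per step, all \<open>H\<^sup>k x\<close> are finitely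
  supported, and symmetry is only needed for truncated inner products.\<close>
locale hermitian_local_operator =
  fixes H :: "(nat \<Rightarrow> complex) \<Rightarrow> nat \<Rightarrow> complex" and M0 :: nat and B :: real
  assumes H_linear: "\<And>a f g. H (\<lambda>u. a * f u + g u) = (\<lambda>u. a * H f u + H g u)"
    and H_bounded: "\<And>f X u. (\<And>v. norm (f v) \<le> X) \<Longrightarrow> norm (H f u) \<le> B * X"
    and bound_nonneg: "0 \<le> B"
    and H_vanishes: "\<And>f M u. M0 \<le> M \<Longrightarrow> (\<And>u. M \<le> u \<Longrightarrow> f u = 0) \<Longrightarrow> Suc M \<le> u \<Longrightarrow> H f u = 0"
    and H_hermitian: "\<And>f g L. (\<And>u. L \<le> u \<Longrightarrow> f u = 0) \<Longrightarrow> (\<And>u. L \<le> u \<Longrightarrow> g u = 0) \<Longrightarrow>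
        (\<Sum>u<L. cnj (H f u) * g u) = (\<Sum>u<L. cnj (f u) * H g u)"
begin

lemma norm_funpow_le: "(\<And>v. norm (x v) \<le> X) \<Longrightarrow> norm ((H ^^ k) x u) \<le> B ^ k * X"
proof (induction k arbitrary: u)
  case (Suc k)
  have "norm (H ((H ^^ k) x) u) \<le> B * (B ^ k * X)" by (rule H_bounded) (use Suc in auto)
  then show ?case by (simp add: mult.assoc)
qed simp

lemma funpow_vanishes:
  "M0 \<le> M \<Longrightarrow> (\<And>u. M \<le> u \<Longrightarrow> x u = 0) \<Longrightarrow> M + k \<le> u \<Longrightarrow> (H ^^ k) x u = 0"
proof (induction k arbitrary: u)
  case (Suc k)
  have "H ((H ^^ k) x) u = 0" by (rule H_vanishes[of "M + k"]) (use Suc in auto)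
  then show ?case by simp
qed simp

lemma funpow_linear: "(H ^^ k) (\<lambda>u. a * f u + g u) = (\<lambda>u. a * (H ^^ k) f u + (H ^^ k) g u)"
  by (induction k) (simp_all add: H_linear)

lemma summable_evol_series:
  assumes "\<And>v. norm (x v) \<le> X"
  shows "summable (\<lambda>k. evol_coeff t k * (H ^^ k) x u)"
proof (rule summable_comparison_test')
  show "summable (\<lambda>k. X * (inverse (fact k) * (\<bar>t\<bar> * B) ^ k))"
    by (intro summable_mult summable_exp)
  have "norm (evol_coeff t k * (H ^^ k) x u) \<le> (\<bar>t\<bar> ^ k / fact k) * (B ^ k * X)" for k
    unfolding norm_mult norm_evol_coeff by (intro mult_left_mono norm_funpow_le assms) auto
  then show "norm (evol_coeff t k * (H ^^ k) x u) \<le> X * (inverse (fact k) * (\<bar>t\<bar> * B) ^ k)" for k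
    by (simp add: power_mult_distrib field_simps)
qed

lemma evol_linear:
  assumes "\<And>v. norm (f v) \<le> X" "\<And>v. norm (g v) \<le> Y"
  shows "evol H t (\<lambda>u. a * f u + g u) u = a * evol H t f u + evol H t g u"
proof -
  note f = summable_evol_series[OF assms(1)] and g = summable_evol_series[OF assms(2)]
  have "evol H t (\<lambda>u. a * f u + g u) u
      = (\<Sum>k. a * (evol_coeff t k * (H ^^ k) f u) + evol_coeff t k * (H ^^ k) g u)"
    unfolding evol_eq_suminf_coeff funpow_linear by (simp add: algebra_simps)
  also have "\<dots> = a * evol H t f u + evol H t g u"
    unfolding evol_eq_suminf_coeff by (simp add: suminf_add[symmetric] suminf_mult f g summable_mult)
  finally show ?thesis .
qed

lemma evol_0: "evol H 0 x u = x u"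
proof -
  have "evol H 0 x u = (\<Sum>k. ((H ^^ k) x u / fact k) * 0 ^ k)"
    unfolding evol_def by (intro suminf_cong) (simp add: power_mult_distrib)
  also have "\<dots> = x u" by (subst powser_zero) simp
  finally show ?thesis .
qed

lemma evol_has_vector_derivative:
  assumes x: "\<And>v. norm (x v) \<le> X"
  shows "((\<lambda>s. evol H s x u) has_vector_derivative (- \<i> * evol H t (H x) u)) (at t)"
proof -
  define a where "a k = (- \<i>) ^ k / fact k * (H ^^ k) x u" for k
  have evol_powser: "evol H s x u = (\<Sum>k. a k * complex_of_real s ^ k)" for s
    unfolding evol_def a_def power_mult_distrib by (intro suminf_cong) simp
  have "summable (\<lambda>k. a k * z ^ k)" for z :: complex
  proof (rule summable_comparison_test')
    show "summable (\<lambda>k. X * (inverse (fact k) * (norm z * B) ^ k))"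
      by (intro summable_mult summable_exp)
    have "norm (a k * z ^ k) = (norm z ^ k / fact k) * norm ((H ^^ k) x u)" for k
      by (simp add: a_def norm_mult norm_divide norm_power)
    also have "\<dots> k \<le> (norm z ^ k / fact k) * (B ^ k * X)" for k
      by (intro mult_left_mono norm_funpow_le x) auto
    finally show "norm (a k * z ^ k) \<le> X * (inverse (fact k) * (norm z * B) ^ k)" for k
      by (simp add: power_mult_distrib field_simps)
  qed
  then have "((\<lambda>z. \<Sum>k. a k * z ^ k) has_field_derivative (\<Sum>k. diffs a k * complex_of_real t ^ k))
      (at (complex_of_real t))"
    by (intro termdiffs_strong'[where K = "norm (complex_of_real t) + 1"]) auto
  moreover have "diffs a k * complex_of_real t ^ k = - \<i> * (evol_coeff t k * (H ^^ k) (H x) u)" for k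
  proof -
    have "(fact (Suc k) :: complex) = of_nat (Suc k) * fact k" by (simp add: fact_Suc)
    then show ?thesis
      unfolding diffs_def a_def evol_coeff_def power_mult_distrib
      by (simp add: funpow_Suc_right field_simps del: funpow.simps of_nat_Suc)
  qed
  then have "(\<Sum>k. diffs a k * complex_of_real t ^ k) = - \<i> * evol H t (H x) u"
    unfolding evol_eq_suminf_coeff
    using suminf_mult[OF summable_evol_series[OF H_bounded[OF x]], of "- \<i>"] by simp
  ultimately show ?thesis
    using has_vector_derivative_real_field by (fastforce simp: evol_powser)
qed

lemma norm_sum_cnj_funpow_le:
  assumes "\<And>v. norm (x v) \<le> X"
  shows "norm (\<Sum>u<M. cnj (x u) * (H ^^ p) x u) \<le> real M * X * X * B ^ p"
proof -
  have "norm (\<Sum>u<M. cnj (x u) * (H ^^ p) x u) \<le> (\<Sum>u<M. X * (B ^ p * X))"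
    using assms norm_funpow_le[OF assms] by (intro sum_norm_le) (simp add: norm_mult mult_mono')
  then show ?thesis by (simp add: mult_ac)
qed

lemma inner_funpow_shift:
  assumes M: "M0 \<le> M" and x: "\<And>u. M \<le> u \<Longrightarrow> x u = 0" and L: "M + j + k \<le> L"
  shows "(\<Sum>u<L. cnj ((H ^^ j) x u) * (H ^^ k) x u) = (\<Sum>u<L. cnj (x u) * (H ^^ (j + k)) x u)"
  using L
proof (induction j arbitrary: k)
  case (Suc j)
  have "(\<Sum>u<L. cnj (H ((H ^^ j) x) u) * (H ^^ k) x u) = (\<Sum>u<L. cnj ((H ^^ j) x u) * H ((H ^^ k) x) u)"
    using Suc.prems by (intro H_hermitian) (auto intro!: funpow_vanishes[OF M x])
  also have "\<dots> = (\<Sum>u<L. cnj (x u) * (H ^^ (j + Suc k)) x u)"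
    using Suc.IH[of "Suc k"] Suc.prems by simp
  finally show ?case by simp
qed simp

lemma sum_norm_partial_evol_eq:
  assumes M: "M0 \<le> M" and x: "\<And>u. M \<le> u \<Longrightarrow> x u = 0"
  shows "complex_of_real (\<Sum>u<M + 2 * N. (norm (\<Sum>k<N. evol_coeff t k * (H ^^ k) x u))\<^sup>2)
    = (\<Sum>(j,k)\<in>{..<N}\<times>{..<N}. cnj (evol_coeff t j) * evol_coeff t k
        * (\<Sum>u<M. cnj (x u) * (H ^^ (j + k)) x u))"
proof -
  let ?c = "evol_coeff t" and ?h = "\<lambda>k. (H ^^ k) x"
  have shift: "(\<Sum>u<M + 2 * N. cnj (?h j u) * ?h k u) = (\<Sum>u<M. cnj (x u) * ?h (j + k) u)"
    if "j < N" "k < N" for j k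
  proof -
    have "M + j + k \<le> M + 2 * N"
      using that by linarith
    from inner_funpow_shift[OF M x this]
    have "(\<Sum>u<M + 2 * N. cnj (?h j u) * ?h k u) = (\<Sum>u<M + 2 * N. cnj (x u) * ?h (j + k) u)" .
    also have "\<dots> = (\<Sum>u<M. cnj (x u) * ?h (j + k) u)"
      by (rule sum.mono_neutral_right) (auto simp: x)
    finally show ?thesis .
  qed
  have norm_sq: "complex_of_real ((norm z)\<^sup>2) = cnj z * z" for z :: complex
    by (subst complex_norm_square) (rule mult.commute)
  have "complex_of_real (\<Sum>u<M + 2 * N. (norm (\<Sum>k<N. ?c k * ?h k u))\<^sup>2)
      = (\<Sum>u<M + 2 * N. \<Sum>j<N. \<Sum>k<N. cnj (?c j) * ?c k * (cnj (?h j u) * ?h k u))"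
    unfolding of_real_sum norm_sq cnj_sum sum_product
    by (intro sum.cong refl) (simp add: mult_ac)
  also have "\<dots> = (\<Sum>j<N. \<Sum>k<N. cnj (?c j) * ?c k * (\<Sum>u<M + 2 * N. cnj (?h j u) * ?h k u))"
    by (simp add: sum_distrib_left sum.swap[of _ "{..<M + 2 * N}"])
  also have "\<dots> = (\<Sum>j<N. \<Sum>k<N. cnj (?c j) * ?c k * (\<Sum>u<M. cnj (x u) * ?h (j + k) u))"
    by (intro sum.cong refl) (simp add: shift)
  finally show ?thesis by (simp add: sum.cartesian_product)
qed

lemma LIMSEQ_sum_norm_partial_evol:
  assumes M: "M0 \<le> M" and x: "\<And>u. M \<le> u \<Longrightarrow> x u = 0"
  shows "(\<lambda>N. \<Sum>u<M + 2 * N. (norm (\<Sum>k<N. evol_coeff t k * (H ^^ k) x u))\<^sup>2)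
    \<longlonglongrightarrow> (\<Sum>u<M. (norm (x u))\<^sup>2)"
proof -
  define X where "X = (\<Sum>u<M. norm (x u))"
  define m where "m p = (\<Sum>u<M. cnj (x u) * (H ^^ p) x u)" for p
  define g where "g j k = cnj (evol_coeff t j) * evol_coeff t k * m (j + k)" for j k
  define e where "e j = inverse (fact j) * (\<bar>t\<bar> * B) ^ j" for j
  have g_le: "norm (g j k) \<le> real M * X * X * (e j * e k)" for j k
  proof -
    have "norm (g j k) = \<bar>t\<bar> ^ j / fact j * (\<bar>t\<bar> ^ k / fact k) * norm (m (j + k))"
      by (simp add: g_def norm_mult norm_evol_coeff)
    also have "\<dots> \<le> \<bar>t\<bar> ^ j / fact j * (\<bar>t\<bar> ^ k / fact k) * (real M * X * X * B ^ (j + k))"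
      unfolding m_def X_def
      by (intro mult_left_mono norm_sum_cnj_funpow_le norm_le_sum_lessThan x) auto
    finally show ?thesis
      by (simp add: e_def power_mult_distrib power_add field_simps)
  qed
  have e_summable: "summable e"
    unfolding e_def[abs_def] by (rule summable_exp)
  have "(\<lambda>N. (\<Sum>(j,k)\<in>{..<N}\<times>{..<N}. g j k) - (\<Sum>(j,k)\<in>{(j,k). j + k < N}. g j k)) \<longlonglongrightarrow> 0"
    by (rule LIMSEQ_sum_square_minus_triangle_0[OF g_le _ _ e_summable])
      (auto simp: e_def X_def bound_nonneg sum_nonneg)
  then have "(\<lambda>N. (\<Sum>(j,k)\<in>{..<N}\<times>{..<N}. g j k) - m 0) \<longlonglongrightarrow> 0"
    by (rule Lim_transform_eventually)
      (auto intro: eventually_sequentiallyI[of 1] simp: g_def sum_triangle_evol_coeff)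
  then have "(\<lambda>N. \<Sum>(j,k)\<in>{..<N}\<times>{..<N}. g j k) \<longlonglongrightarrow> m 0"
    by (simp add: LIM_zero_iff)
  moreover have "m 0 = complex_of_real (\<Sum>u<M. (norm (x u))\<^sup>2)"
    unfolding m_def of_real_sum complex_norm_square by (simp add: mult.commute)
  moreover have "(\<Sum>(j,k)\<in>{..<N}\<times>{..<N}. g j k)
      = complex_of_real (\<Sum>u<M + 2 * N. (norm (\<Sum>k<N. evol_coeff t k * (H ^^ k) x u))\<^sup>2)" for N
    unfolding g_def m_def by (rule sum_norm_partial_evol_eq[OF M x, symmetric])
  ultimately show ?thesis
    by (simp only: tendsto_of_real_iff)
qed

lemma sum_norm_evol_le:
  assumes M: "M0 \<le> M" and x: "\<And>u. M \<le> u \<Longrightarrow> x u = 0" and F: "finite F"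
  shows "(\<Sum>u\<in>F. (norm (evol H t x u))\<^sup>2) \<le> (\<Sum>u<M. (norm (x u))\<^sup>2)"
proof (rule LIMSEQ_le[OF _ LIMSEQ_sum_norm_partial_evol[OF M x]])
  define S where "S N u = (\<Sum>k<N. evol_coeff t k * (H ^^ k) x u)" for N u
  show "(\<lambda>N. \<Sum>u\<in>F. (norm (S N u))\<^sup>2) \<longlonglongrightarrow> (\<Sum>u\<in>F. (norm (evol H t x u))\<^sup>2)"
    unfolding S_def evol_eq_suminf_coeff
    by (intro tendsto_intros summable_LIMSEQ summable_evol_series[OF norm_le_sum_lessThan[OF x]])
  have "(\<Sum>u\<in>F. (norm (S N u))\<^sup>2) \<le> (\<Sum>u<M + 2 * N. (norm (S N u))\<^sup>2)" for N
  proof -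
    have "S N u = 0" if "M + 2 * N \<le> u" for u
      unfolding S_def using that by (intro sum.neutral) (auto intro!: funpow_vanishes[OF M x])
    then have "(\<Sum>u\<in>F \<union> {..<M + 2 * N}. (norm (S N u))\<^sup>2) = (\<Sum>u<M + 2 * N. (norm (S N u))\<^sup>2)"
      by (intro sum.mono_neutral_right) (auto simp: F)
    moreover have "(\<Sum>u\<in>F. (norm (S N u))\<^sup>2) \<le> (\<Sum>u\<in>F \<union> {..<M + 2 * N}. (norm (S N u))\<^sup>2)"
      by (rule sum_mono2) (auto simp: F)
    ultimately show ?thesis by simp
  qed
  then show "\<exists>N0. \<forall>N\<ge>N0. (\<Sum>u\<in>F. (norm (S N u))\<^sup>2) \<le> (\<Sum>u<M + 2 * N. (norm (S N u))\<^sup>2)"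
    by blast
qed

text \<open>Duhamel: \<open>s \<mapsto> e\<^sup>i\<^sup>\<mu>\<^sup>s (e\<^sup>-\<^sup>i\<^sup>s\<^sup>H \<phi>)(u)\<close> has derivative \<open>-i e\<^sup>i\<^sup>\<mu>\<^sup>s (e\<^sup>-\<^sup>i\<^sup>s\<^sup>H \<rho>)(u)\<close>.\<close>
lemma norm_evol_approx_eigenvector_le:
  assumes eigen: "H \<phi> = (\<lambda>u. complex_of_real \<mu> * \<phi> u + \<rho> u)"
    and \<phi>: "\<And>v. norm (\<phi> v) \<le> X" and \<rho>: "\<And>v. norm (\<rho> v) \<le> Y"
    and R: "\<And>s. norm (evol H s \<rho> u) \<le> R"
  shows "norm (evol H t \<phi> u) \<le> norm (\<phi> u) + \<bar>t\<bar> * R"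
proof -
  define c where "c = \<i> * complex_of_real \<mu>"
  define F where "F s = exp (c * complex_of_real s) * evol H s \<phi> u" for s
  define D where "D s = - \<i> * exp (c * complex_of_real s) * evol H s \<rho> u" for s
  have norm_exp: "norm (exp (c * complex_of_real s)) = 1" for s
    by (simp add: c_def)
  have "(F has_vector_derivative D s) (at s)" for s
  proof -
    have "((\<lambda>z. exp (c * z)) has_field_derivative c * exp (c * complex_of_real s))
        (at (complex_of_real s))"
      by (auto intro!: derivative_eq_intros)
    from has_vector_derivative_real_field[OF this]
    have "((\<lambda>s. exp (c * complex_of_real s)) has_vector_derivative c * exp (c * complex_of_real s)) (at s)"
      by simp
    moreover have "((\<lambda>s. evol H s \<phi> u) has_vector_derivative - \<i> * evol H s (H \<phi>) u) (at s)"
      by (rule evol_has_vector_derivative[OF \<phi>])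
    ultimately show ?thesis
      unfolding F_def
      by (rule has_vector_derivative_eq_rhs[OF has_vector_derivative_mult])
        (simp only: eigen evol_linear[OF \<phi> \<rho>], simp add: D_def c_def algebra_simps)
  qed
  moreover have "norm (D s) \<le> R" for s
    using R[of s] by (simp add: D_def norm_mult c_def)
  ultimately have "norm (F t - F 0) \<le> R * norm (t - 0)"
    by (intro differentiable_bound[where S = UNIV and f' = "\<lambda>s h. h *\<^sub>R D s"])
      (auto simp: has_vector_derivative_def onorm_scaleR_left onorm_id)
  moreover have "F 0 = \<phi> u" "norm (F t) = norm (evol H t \<phi> u)"
    by (simp_all add: F_def evol_0 norm_mult c_def)
  ultimately show ?thesis
    using norm_triangle_sub[of "F t" "F 0"] by (simp add: mult.commute)
qed

end

lemma l2_inner_basis: "l2_inner (basis w) f = f w"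
proof -
  have "l2_inner (basis w) f = (\<Sum>\<^sub>\<infinity>u\<in>{w}. cnj (basis w u) * f u)"
    unfolding l2_inner_def by (rule infsum_cong_neutral) (auto simp: basis_def)
  then show ?thesis by (simp add: basis_def)
qed

lemma eps1_eq: "w < n \<Longrightarrow> eps1 n w = 1 / sqrt (real n)"
  by (simp add: eps1_def l2_inner_basis z1_def norm_divide)

lemma proj_eq: "proj w f u = (if u = w then f w else 0)"
  by (simp add: proj_def l2_inner_basis basis_def)

lemma norm_sq_le_l2norm_sq:
  assumes "\<And>F. finite F \<Longrightarrow> (\<Sum>u\<in>F. (norm (f u))\<^sup>2) \<le> C"
  shows "(norm (f w))\<^sup>2 \<le> l2norm_sq f"
proof -
  have "(\<lambda>u. (norm (f u))\<^sup>2) summable_on UNIV"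
    using assms by (intro nonneg_bdd_above_summable_on bdd_aboveI2) auto
  then have "(\<Sum>\<^sub>\<infinity>u\<in>{w}. (norm (f u))\<^sup>2) \<le> (\<Sum>\<^sub>\<infinity>u. (norm (f u))\<^sup>2)"
    by (intro infsum_mono_neutral) auto
  then show ?thesis by (simp add: l2norm_sq_def)
qed

lemma adj_op_eq_sum_lessThan:
  assumes "finite {v. A u v}" and "\<And>v. L \<le> v \<Longrightarrow> f v = 0"
  shows "adj_op A f u = (\<Sum>v<L. if A u v then f v else 0)"
proof -
  have "adj_op A f u = (\<Sum>v\<in>{v. A u v} \<inter> {..<L}. f v)"
    unfolding adj_op_def by (rule sum.mono_neutral_right) (use assms in \<open>auto simp: not_less\<close>)
  also have "\<dots> = (\<Sum>v<L. if A u v then f v else 0)"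
    by (simp add: sum.inter_restrict Int_commute)
  finally show ?thesis .
qed

lemma adj_op_hermitian:
  assumes sym: "\<And>u v. A u v \<Longrightarrow> A v u" and fin: "\<And>u. finite {v. A u v}"
    and f: "\<And>u. L \<le> u \<Longrightarrow> f u = 0" and g: "\<And>u. L \<le> u \<Longrightarrow> g u = 0"
  shows "(\<Sum>u<L. cnj (adj_op A f u) * g u) = (\<Sum>u<L. cnj (f u) * adj_op A g u)"
proof -
  have sym_eq: "A u v = A v u" for u v
    using sym by blast
  have if_mult: "cnj (if P then a else 0) = (if P then cnj a else 0)"
    "(if P then a else 0) * b = (if P then a * b else 0)"
    "b * (if P then a else 0) = (if P then b * a else 0)" for P and a b :: complex
    by simp_all
  have "(\<Sum>u<L. cnj (adj_op A f u) * g u) = (\<Sum>u<L. \<Sum>v<L. if A u v then cnj (f v) * g u else 0)"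
    by (simp add: adj_op_eq_sum_lessThan[OF fin f] cnj_sum sum_distrib_right if_mult)
  also have "\<dots> = (\<Sum>v<L. \<Sum>u<L. if A v u then cnj (f v) * g u else 0)"
    by (subst sum.swap) (simp add: sym_eq)
  also have "\<dots> = (\<Sum>u<L. cnj (f u) * adj_op A g u)"
    by (simp add: adj_op_eq_sum_lessThan[OF fin g] sum_distrib_left if_mult)
  finally show ?thesis .
qed

lemma proj_hermitian: "(\<Sum>u<L. cnj (proj w f u) * g u) = (\<Sum>u<L. cnj (f u) * proj w g u)"
proof -
  have "cnj (proj w f u) * g u = (if u = w then cnj (f w) * g w else 0)"
    "cnj (f u) * proj w g u = (if u = w then cnj (f w) * g w else 0)" for u
    by (simp_all add: proj_eq)
  then show ?thesis by simp
qed

lemma ham_eq: "ham E n \<gamma> w f u = adj_op (cone_path_adj E n) f u + complex_of_real \<gamma> * (if u = w then f w else 0)"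
  by (simp add: ham_def proj_eq)

lemma cone_path_adj_neighbours_subset:
  assumes "\<And>u v. E u v \<Longrightarrow> u < n \<and> v < n"
  shows "{v. cone_path_adj E n u v} \<subseteq> (if u \<le> n then {..Suc n} else {u - 1, Suc u})"
  by (auto simp: cone_path_adj_def dest: assms)

lemma finite_cone_path_adj_neighbours:
  "(\<And>u v. E u v \<Longrightarrow> u < n \<and> v < n) \<Longrightarrow> finite {v. cone_path_adj E n u v}"
  by (rule finite_subset[OF cone_path_adj_neighbours_subset]) auto

lemma card_cone_path_adj_neighbours_le:
  assumes "\<And>u v. E u v \<Longrightarrow> u < n \<and> v < n"
  shows "card {v. cone_path_adj E n u v} \<le> n + 2"
proof -
  have "card {v. cone_path_adj E n u v} \<le> card (if u \<le> n then {..Suc n} else {u - 1, Suc u})"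
    by (rule card_mono[OF _ cone_path_adj_neighbours_subset[OF assms]]) auto
  also have "\<dots> \<le> n + 2"
    by (auto simp: card_insert_if)
  finally show ?thesis .
qed

lemma ham_hermitian:
  assumes E_less: "\<And>u v. E u v \<Longrightarrow> u < n \<and> v < n" and E_sym: "\<And>u v. E u v \<Longrightarrow> E v u"
    and f: "\<And>u. L \<le> u \<Longrightarrow> f u = 0" and g: "\<And>u. L \<le> u \<Longrightarrow> g u = 0"
  shows "(\<Sum>u<L. cnj (ham E n \<gamma> w f u) * g u) = (\<Sum>u<L. cnj (f u) * ham E n \<gamma> w g u)"
proof -
  let ?A = "cone_path_adj E n"
  have "?A u v \<Longrightarrow> ?A v u" for u v
    using E_sym by (auto simp: cone_path_adj_def)
  then have "(\<Sum>u<L. cnj (adj_op ?A f u) * g u) = (\<Sum>u<L. cnj (f u) * adj_op ?A g u)"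
    by (rule adj_op_hermitian[OF _ finite_cone_path_adj_neighbours[OF E_less] f g])
  moreover have "(\<Sum>u<L. cnj (ham E n \<gamma> w f u) * g u)
      = (\<Sum>u<L. cnj (adj_op ?A f u) * g u) + \<gamma> * (\<Sum>u<L. cnj (proj w f u) * g u)"
    by (simp add: ham_def sum.distrib sum_distrib_left distrib_right mult.assoc)
  moreover have "(\<Sum>u<L. cnj (f u) * ham E n \<gamma> w g u)
      = (\<Sum>u<L. cnj (f u) * adj_op ?A g u) + \<gamma> * (\<Sum>u<L. cnj (f u) * proj w g u)"
    by (simp add: ham_def sum.distrib sum_distrib_left distrib_left mult.left_commute)
  ultimately show ?thesis
    by (simp add: proj_hermitian)
qed

lemma hermitian_local_operator_ham:
  assumes E_less: "\<And>u v. E u v \<Longrightarrow> u < n \<and> v < n" and E_sym: "\<And>u v. E u v \<Longrightarrow> E v u"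
    and w: "w < n"
  shows "hermitian_local_operator (ham E n \<gamma> w) (Suc n) (real n + 2 + \<bar>\<gamma>\<bar>)"
proof
  let ?A = "cone_path_adj E n"
  fix f g :: "nat \<Rightarrow> complex"
  show "ham E n \<gamma> w (\<lambda>u. a * f u + g u) = (\<lambda>u. a * ham E n \<gamma> w f u + ham E n \<gamma> w g u)" for a
    by (simp add: fun_eq_iff ham_eq adj_op_def sum.distrib sum_distrib_left algebra_simps)
  show "norm (ham E n \<gamma> w f u) \<le> (real n + 2 + \<bar>\<gamma>\<bar>) * X" if f: "\<And>v. norm (f v) \<le> X" for X u
  proof -
    have X: "0 \<le> X" using norm_ge_zero f order_trans by blast
    have "norm (adj_op ?A f u) \<le> real (card {v. ?A u v}) * X"
      unfolding adj_op_def using sum_norm_le[of _ f "\<lambda>_. X"] f by simp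
    also have "\<dots> \<le> (real n + 2) * X"
      using card_cone_path_adj_neighbours_le[of E n u, OF E_less] X by (intro mult_right_mono) auto
    moreover have "norm (ham E n \<gamma> w f u) \<le> norm (adj_op ?A f u) + \<bar>\<gamma>\<bar> * X"
      unfolding ham_eq using X f[of w]
      by (intro order.trans[OF norm_triangle_ineq]) (auto simp: norm_mult intro!: mult_left_mono)
    ultimately show ?thesis by (simp add: algebra_simps)
  qed
  show "ham E n \<gamma> w f u = 0" if "Suc n \<le> M" "\<And>u. M \<le> u \<Longrightarrow> f u = 0" "Suc M \<le> u" for M u
  proof -
    have "{v. ?A u v} \<subseteq> {u - 1, Suc u}"
      using cone_path_adj_neighbours_subset[OF E_less, where u = u] that by auto
    then show ?thesis
      using that w by (auto simp: ham_eq adj_op_def intro!: sum.neutral)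
  qed
  show "(\<Sum>u<L. cnj (ham E n \<gamma> w f u) * g u) = (\<Sum>u<L. cnj (f u) * ham E n \<gamma> w g u)"
    if "\<And>u. L \<le> u \<Longrightarrow> f u = 0" "\<And>u. L \<le> u \<Longrightarrow> g u = 0" for L
    by (rule ham_hermitian[OF E_less E_sym that])
qed simp

locale cone_over_regular_graph =
  fixes E :: "nat \<Rightarrow> nat \<Rightarrow> bool" and n d :: nat and \<gamma> :: real and w :: nat
  assumes regular: "regular_graph n d E" and w_less: "w < n"
begin

abbreviation "A \<equiv> cone_path_adj E n"
abbreviation "Hw \<equiv> ham E n \<gamma> w"

lemma E_less: "E u v \<Longrightarrow> u < n \<and> v < n"
  and E_sym: "E u v \<Longrightarrow> E v u"
  and degree: "u < n \<Longrightarrow> card {v. E u v} = d"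
  using regular by (auto simp: regular_graph_def)

lemma n_pos: "0 < n"
  using w_less by simp

sublocale hermitian_local_operator Hw "Suc n" "real n + 2 + \<bar>\<gamma>\<bar>"
  by (rule hermitian_local_operator_ham[OF E_less E_sym w_less])

lemma neighbours_graph: "u < n \<Longrightarrow> {v. A u v} = insert n {v. E u v}"
  by (auto simp: cone_path_adj_def dest: E_less)

lemma neighbours_apex: "{v. A n v} = insert (Suc n) {..<n}"
  by (auto simp: cone_path_adj_def)

lemma neighbours_path_start: "{v. A (Suc n) v} = {n, Suc (Suc n)}"
  by (auto simp: cone_path_adj_def)

lemma neighbours_path: "Suc (Suc n) \<le> u \<Longrightarrow> {v. A u v} = {u - 1, Suc u}"
  by (auto simp: cone_path_adj_def)

definition cone_eigenvalue :: real where
  "cone_eigenvalue = (real d + sqrt ((real d)\<^sup>2 + 4 * real n)) / 2"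

definition apex_coeff :: real where
  "apex_coeff = sqrt (real n) / cone_eigenvalue"

text \<open>\<open>cone_eigvec\<close> is the Perron eigenvector of the finite cone over the regular graph, with
  eigenvalue the positive root of \<open>\<lambda>\<^sup>2 = d \<lambda> + n\<close>; on the infinite graph the first path edge
  and \<open>\<gamma> P\<^sub>w\<close> add \<open>eigen_defect\<close>.\<close>
definition cone_eigvec :: "nat \<Rightarrow> complex" where
  "cone_eigvec u = z1 n u + complex_of_real apex_coeff * basis n u"

definition eigen_defect :: "nat \<Rightarrow> complex" where
  "eigen_defect u = complex_of_real apex_coeff * basis (Suc n) u
    + complex_of_real (\<gamma> / sqrt (real n)) * basis w u"

lemma degree_le_cone_eigenvalue: "real d \<le> cone_eigenvalue"
  unfolding cone_eigenvalue_def using real_le_rsqrt[of "real d" "(real d)\<^sup>2 + 4 * real n"] by simp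

lemma cone_eigenvalue_pos: "0 < cone_eigenvalue"
  unfolding cone_eigenvalue_def using n_pos
  by (intro divide_pos_pos add_nonneg_pos real_sqrt_gt_zero) auto

lemma cone_eigenvalue_sq: "cone_eigenvalue\<^sup>2 = real d * cone_eigenvalue + real n"
  unfolding cone_eigenvalue_def by (simp add: power2_eq_square field_simps)

lemma apex_coeff_nonneg: "0 \<le> apex_coeff"
  using cone_eigenvalue_pos by (simp add: apex_coeff_def)

lemma apex_coeff_mult_cone_eigenvalue: "apex_coeff * cone_eigenvalue = sqrt (real n)"
  using cone_eigenvalue_pos by (simp add: apex_coeff_def)

lemma apex_coeff_mult_degree_le: "apex_coeff * real d \<le> sqrt (real n)"
  using mult_left_mono[OF degree_le_cone_eigenvalue apex_coeff_nonneg]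
  by (simp add: apex_coeff_mult_cone_eigenvalue)

lemma cone_eigenvalue_div_sqrt: "cone_eigenvalue / sqrt (real n) = apex_coeff + real d / sqrt (real n)"
proof -
  have sq: "cone_eigenvalue - real d = real n / cone_eigenvalue"
    using cone_eigenvalue_sq cone_eigenvalue_pos by (simp add: power2_eq_square field_simps)
  have s: "sqrt (real n) * sqrt (real n) = real n" by simp
  have "cone_eigenvalue / sqrt (real n) = (cone_eigenvalue - real d) / sqrt (real n) + real d / sqrt (real n)"
    by (simp add: diff_divide_distrib)
  also have "(cone_eigenvalue - real d) / sqrt (real n) = apex_coeff"
    unfolding sq apex_coeff_def using n_pos cone_eigenvalue_pos by (simp add: field_simps s)
  finally show ?thesis .
qed

lemma adj_op_cone_eigvec_graph:
  assumes "u < n"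
  shows "adj_op A cone_eigvec u = complex_of_real (cone_eigenvalue / sqrt (real n))"
proof -
  have "finite {v. E u v}" "n \<notin> {v. E u v}"
    by (auto intro: finite_subset[of _ "{..<n}"] dest: E_less)
  then have "adj_op A cone_eigvec u = cone_eigvec n + (\<Sum>v | E u v. cone_eigvec v)"
    by (simp add: adj_op_def neighbours_graph[OF assms])
  also have "(\<Sum>v | E u v. cone_eigvec v) = (\<Sum>v | E u v. complex_of_real (1 / sqrt (real n)))"
    by (intro sum.cong) (auto simp: cone_eigvec_def z1_def basis_def dest: E_less)
  also have "cone_eigvec n + \<dots> = complex_of_real (apex_coeff + real d / sqrt (real n))"
    using degree[OF assms] by (simp add: cone_eigvec_def z1_def basis_def)
  finally show ?thesis
    by (simp only: cone_eigenvalue_div_sqrt)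
qed

lemma adj_op_cone_eigvec_apex: "adj_op A cone_eigvec n = complex_of_real (apex_coeff * cone_eigenvalue)"
proof -
  have "adj_op A cone_eigvec n = (\<Sum>v<n. complex_of_real (1 / sqrt (real n)))"
    by (simp add: adj_op_def neighbours_apex cone_eigvec_def z1_def basis_def)
  also have "\<dots> = complex_of_real (real n / sqrt (real n))"
    by simp
  also have "real n / sqrt (real n) = apex_coeff * cone_eigenvalue"
    by (simp add: real_div_sqrt apex_coeff_mult_cone_eigenvalue)
  finally show ?thesis .
qed

lemma ham_cone_eigvec: "Hw cone_eigvec = (\<lambda>u. complex_of_real cone_eigenvalue * cone_eigvec u + eigen_defect u)"
proof
  fix u
  consider "u < n" | "u = n" | "u = Suc n" | "Suc (Suc n) \<le> u" by linarith
  then show "Hw cone_eigvec u = complex_of_real cone_eigenvalue * cone_eigvec u + eigen_defect u"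
  proof cases
    case 1
    then show ?thesis
      unfolding ham_eq adj_op_cone_eigvec_graph[OF 1] using w_less
      by (simp add: cone_eigvec_def eigen_defect_def z1_def basis_def)
  next
    case 2
    then show ?thesis
      unfolding ham_eq 2 adj_op_cone_eigvec_apex using w_less
      by (simp add: cone_eigvec_def eigen_defect_def z1_def basis_def mult.commute)
  next
    case 3
    then show ?thesis
      using w_less
      by (simp add: ham_eq adj_op_def neighbours_path_start cone_eigvec_def eigen_defect_def
          z1_def basis_def)
  next
    case 4
    then show ?thesis
      using w_less
      by (auto simp: ham_eq adj_op_def neighbours_path cone_eigvec_def eigen_defect_def
          z1_def basis_def)
  qed
qed

lemma norm_cone_eigvec_le: "norm (cone_eigvec v) \<le> 1 / sqrt (real n) + apex_coeff"
  using apex_coeff_nonneg by (auto simp: cone_eigvec_def z1_def basis_def norm_divide)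

lemma norm_eigen_defect_le: "norm (eigen_defect v) \<le> apex_coeff + \<bar>\<gamma>\<bar> / sqrt (real n)"
  unfolding eigen_defect_def using apex_coeff_nonneg
  by (intro order.trans[OF norm_triangle_ineq] add_mono) (auto simp: basis_def norm_divide)

lemma sum_norm_eigen_defect:
  "(\<Sum>u<Suc (Suc n). (norm (eigen_defect u))\<^sup>2) = apex_coeff\<^sup>2 + (\<gamma> / sqrt (real n))\<^sup>2"
proof -
  have "(norm (eigen_defect u))\<^sup>2
      = (if u = Suc n then apex_coeff\<^sup>2 else 0) + (if u = w then (\<gamma> / sqrt (real n))\<^sup>2 else 0)" for u
    using w_less apex_coeff_nonneg
    by (auto simp: eigen_defect_def basis_def norm_mult norm_divide power_divide)
  then show ?thesis
    using w_less by (simp add: sum.distrib)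
qed

lemma norm_evol_eigen_defect_le:
  "norm (evol Hw s eigen_defect w) \<le> sqrt (apex_coeff\<^sup>2 + (\<gamma> / sqrt (real n))\<^sup>2)"
proof (rule real_le_rsqrt)
  have "(\<Sum>u\<in>{w}. (norm (evol Hw s eigen_defect u))\<^sup>2) \<le> (\<Sum>u<Suc (Suc n). (norm (eigen_defect u))\<^sup>2)"
    using w_less by (intro sum_norm_evol_le) (auto simp: eigen_defect_def basis_def)
  then show "(norm (evol Hw s eigen_defect w))\<^sup>2 \<le> apex_coeff\<^sup>2 + (\<gamma> / sqrt (real n))\<^sup>2"
    unfolding sum_norm_eigen_defect by simp
qed

lemma norm_evol_basis_le: "norm (evol Hw t (basis k) u) \<le> 1"
proof (rule power2_le_imp_le)
  have "(\<Sum>v\<in>{u}. (norm (evol Hw t (basis k) v))\<^sup>2) \<le> (\<Sum>v<Suc (max n k). (norm (basis k v))\<^sup>2)"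
    by (intro sum_norm_evol_le) (auto simp: basis_def)
  also have "\<dots> = (\<Sum>v<Suc (max n k). if v = k then 1 else 0)"
    by (intro sum.cong) (auto simp: basis_def)
  finally show "(norm (evol Hw t (basis k) u))\<^sup>2 \<le> 1\<^sup>2"
    by (simp add: less_Suc_eq_le del: sum.lessThan_Suc)
qed simp

lemma sum_norm_z1: "(\<Sum>u<Suc n. (norm (z1 n u))\<^sup>2) = 1"
  using n_pos by (simp add: z1_def norm_divide power_divide)

lemma sum_norm_evol_z1_le: "finite F \<Longrightarrow> (\<Sum>u\<in>F. (norm (evol Hw t (z1 n) u))\<^sup>2) \<le> 1"
  using sum_norm_evol_le[of "Suc n" "z1 n" F t] sum_norm_z1 by (simp add: z1_def del: sum.lessThan_Suc)

lemma norm_evol_z1_le: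
  "norm (evol Hw t (z1 n) w)
    \<le> 1 / sqrt (real n) + \<bar>t\<bar> * sqrt (apex_coeff\<^sup>2 + (\<gamma> / sqrt (real n))\<^sup>2) + apex_coeff"
proof -
  have "z1 n = (\<lambda>u. complex_of_real (- apex_coeff) * basis n u + cone_eigvec u)"
    by (simp add: fun_eq_iff cone_eigvec_def)
  moreover have "evol Hw t (\<lambda>u. complex_of_real (- apex_coeff) * basis n u + cone_eigvec u) w
      = complex_of_real (- apex_coeff) * evol Hw t (basis n) w + evol Hw t cone_eigvec w"
    by (rule evol_linear[OF _ norm_cone_eigvec_le, of _ 1]) (simp add: basis_def)
  ultimately have "evol Hw t (z1 n) w
      = complex_of_real (- apex_coeff) * evol Hw t (basis n) w + evol Hw t cone_eigvec w"
    by simp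
  also have "norm \<dots> \<le> apex_coeff + (norm (cone_eigvec w)
      + \<bar>t\<bar> * sqrt (apex_coeff\<^sup>2 + (\<gamma> / sqrt (real n))\<^sup>2))"
    using mult_left_mono[OF norm_evol_basis_le apex_coeff_nonneg]
      norm_evol_approx_eigenvector_le[OF ham_cone_eigvec norm_cone_eigvec_le norm_eigen_defect_le
        norm_evol_eigen_defect_le]
    by (intro order.trans[OF norm_triangle_ineq] add_mono) (simp_all add: norm_mult apex_coeff_nonneg)
  finally show ?thesis
    using w_less by (simp add: cone_eigvec_def z1_def basis_def norm_divide)
qed

lemma funpow_ham_eq_on_graph:
  assumes \<gamma>: "\<gamma> = 0" and f: "\<And>u v. u < n \<Longrightarrow> v < n \<Longrightarrow> f u = f v" and "u < n" "v < n"
  shows "(Hw ^^ k) f u = (Hw ^^ k) f v"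
  using assms(3,4)
proof (induction k arbitrary: u v)
  case 0
  then show ?case
    using f[OF 0] by simp
next
  case (Suc k)
  let ?g = "(Hw ^^ k) f"
  have "Hw ?g x = ?g n + of_nat d * ?g 0" if "x < n" for x
  proof -
    have "finite {v. E x v}" "n \<notin> {v. E x v}"
      by (auto intro: finite_subset[of _ "{..<n}"] dest: E_less)
    have "Hw ?g x = adj_op A ?g x"
      using \<gamma> by (simp add: ham_eq)
    also have "\<dots> = ?g n + (\<Sum>v | E x v. ?g v)"
      using \<open>finite {v. E x v}\<close> \<open>n \<notin> {v. E x v}\<close> by (simp add: adj_op_def neighbours_graph[OF that])
    also have "(\<Sum>v | E x v. ?g v) = (\<Sum>v | E x v. ?g 0)"
    proof (rule sum.cong)
      show "?g v = ?g 0" if "v \<in> {v. E x v}" for v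
        using that E_less Suc.IH[of v 0] n_pos by blast
    qed simp
    also have "\<dots> = of_nat d * ?g 0"
      using degree[OF that] by simp
    finally show ?thesis .
  qed
  then show ?case
    using Suc.prems by simp
qed

text \<open>Without the potential all vertices of the regular graph carry the same amplitude, and
  unitarity bounds their total weight by 1.\<close>
lemma norm_evol_z1_le_of_gamma_0:
  assumes "\<gamma> = 0"
  shows "norm (evol Hw t (z1 n) w) \<le> 1 / sqrt (real n)"
proof (rule power2_le_imp_le)
  have "(Hw ^^ k) (z1 n) u = (Hw ^^ k) (z1 n) w" if "u < n" for u k
    by (rule funpow_ham_eq_on_graph[OF assms _ that w_less]) (simp add: z1_def)
  then have "evol Hw t (z1 n) u = evol Hw t (z1 n) w" if "u < n" for u
    unfolding evol_def using that by simp
  then have "real n * (norm (evol Hw t (z1 n) w))\<^sup>2 = (\<Sum>u<n. (norm (evol Hw t (z1 n) u))\<^sup>2)"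
    by simp
  also have "\<dots> \<le> 1"
    by (rule sum_norm_evol_z1_le) simp
  finally show "(norm (evol Hw t (z1 n) w))\<^sup>2 \<le> (1 / sqrt (real n))\<^sup>2"
    using n_pos by (simp add: power_divide field_simps)
qed simp

lemma sq_norm_evol_z1_sub_le_l2norm_sq:
  assumes \<zeta>: "norm \<zeta> = 1"
  shows "(norm (evol Hw t (z1 n) w - \<zeta>))\<^sup>2 \<le> l2norm_sq (\<lambda>u. evol Hw t (z1 n) u - \<zeta> * basis w u)"
proof -
  let ?a = "evol Hw t (z1 n)"
  have "(\<Sum>u\<in>F. (norm (?a u - \<zeta> * basis w u))\<^sup>2) \<le> 4" if F: "finite F" for F
  proof -
    have "(norm (?a u - \<zeta> * basis w u))\<^sup>2 \<le> 2 * (norm (?a u))\<^sup>2 + 2 * (norm (basis w u))\<^sup>2" for u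
      using sq_norm_diff_le[of "?a u" "\<zeta> * basis w u"] \<zeta> by (simp add: norm_mult)
    then have "(\<Sum>u\<in>F. (norm (?a u - \<zeta> * basis w u))\<^sup>2)
        \<le> (\<Sum>u\<in>F. 2 * (norm (?a u))\<^sup>2 + 2 * (norm (basis w u))\<^sup>2)"
      by (rule sum_mono)
    also have "\<dots> = 2 * (\<Sum>u\<in>F. (norm (?a u))\<^sup>2) + 2 * (\<Sum>u\<in>F. (norm (basis w u))\<^sup>2)"
      by (simp add: sum.distrib sum_distrib_left)
    also have "(\<Sum>u\<in>F. (norm (basis w u))\<^sup>2) = (\<Sum>u\<in>F. if u = w then 1 else 0)"
      by (intro sum.cong) (auto simp: basis_def)
    finally show ?thesis
      using sum_norm_evol_z1_le[OF F, of t] F by (simp split: if_splits)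
  qed
  from norm_sq_le_l2norm_sq[OF this, of w] show ?thesis
    by (simp add: basis_def)
qed

lemma three_quarters_le_norm_evol_z1:
  assumes \<zeta>: "norm \<zeta> = 1"
    and close: "l2norm_sq (\<lambda>u. evol Hw t (z1 n) u - \<zeta> * basis w u) \<le> 1 / 16"
  shows "3 / 4 \<le> norm (evol Hw t (z1 n) w)"
proof -
  have "(norm (evol Hw t (z1 n) w - \<zeta>))\<^sup>2 \<le> (1 / 4)\<^sup>2"
    using order_trans[OF sq_norm_evol_z1_sub_le_l2norm_sq[OF \<zeta>] close] by (simp add: power_divide)
  then have "norm (evol Hw t (z1 n) w - \<zeta>) \<le> 1 / 4"
    by (rule power2_le_imp_le) simp
  then show ?thesis
    using \<zeta> norm_triangle_ineq2[of \<zeta> "evol Hw t (z1 n) w"] by (simp add: norm_minus_commute)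
qed

lemma apex_coeff_le_quarter:
  assumes "sqrt (real n) \<le> 1 / 4 * real d"
  shows "apex_coeff \<le> 1 / 4"
proof -
  have "apex_coeff * (4 * sqrt (real n)) \<le> apex_coeff * real d"
    using assms apex_coeff_nonneg by (intro mult_left_mono) auto
  then have "sqrt (real n) * (4 * apex_coeff) \<le> sqrt (real n) * 1"
    using apex_coeff_mult_degree_le by (simp add: mult_ac)
  then show ?thesis
    using n_pos by simp
qed

lemma defect_norm_le:
  assumes \<gamma>: "sqrt (real n) \<le> \<bar>\<gamma>\<bar>" and apex: "apex_coeff \<le> 1"
  shows "sqrt (apex_coeff\<^sup>2 + (\<gamma> / sqrt (real n))\<^sup>2) \<le> 2 * \<bar>\<gamma>\<bar> / sqrt (real n)"
proof (rule real_le_lsqrt)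
  have "1 \<le> \<bar>\<gamma>\<bar> / sqrt (real n)"
    using \<gamma> n_pos by (simp add: le_divide_eq)
  then have "1 \<le> (\<gamma> / sqrt (real n))\<^sup>2"
    using one_le_power[of "\<bar>\<gamma>\<bar> / sqrt (real n)" 2] by (simp add: power_divide)
  moreover have "apex_coeff\<^sup>2 \<le> 1"
    using apex apex_coeff_nonneg by (simp add: power_le_one)
  moreover have "(2 * \<bar>\<gamma>\<bar> / sqrt (real n))\<^sup>2 = 4 * (\<gamma> / sqrt (real n))\<^sup>2"
    by (simp add: power_divide power_mult_distrib)
  ultimately show "apex_coeff\<^sup>2 + (\<gamma> / sqrt (real n))\<^sup>2 \<le> (2 * \<bar>\<gamma>\<bar> / sqrt (real n))\<^sup>2"
    by linarith
qed simp

lemma gamma_time_lower_bound: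
  assumes n: "16 \<le> n" and d: "sqrt (real n) \<le> 1 / 4 * real d"
    and \<gamma>: "\<bar>1 / (\<gamma> * eps1 n w)\<bar> \<le> 1" and \<zeta>: "norm \<zeta> = 1"
    and close: "l2norm_sq (\<lambda>u. evol Hw t (z1 n) u - \<zeta> * basis w u) \<le> 1 / 16"
  shows "1 / 8 * norm (1 / eps1 n w) \<le> norm (\<gamma> * t)"
proof -
  let ?s = "sqrt (real n)"
  have s_inv: "1 / ?s \<le> 1 / 4"
    using real_sqrt_le_mono[of 16 "real n"] n by (intro divide_left_mono) (auto simp: n_pos)
  note a = three_quarters_le_norm_evol_z1[OF \<zeta> close]
  have "\<gamma> \<noteq> 0"
    using norm_evol_z1_le_of_gamma_0[of t] a s_inv by fastforce
  with \<gamma> have "?s \<le> \<bar>\<gamma>\<bar>"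
    using n_pos by (simp add: eps1_eq[OF w_less] abs_div field_simps)
  moreover note apex = apex_coeff_le_quarter[OF d]
  ultimately have R: "sqrt (apex_coeff\<^sup>2 + (\<gamma> / ?s)\<^sup>2) \<le> 2 * \<bar>\<gamma>\<bar> / ?s"
    by (intro defect_norm_le) auto
  have "?s * (1 / 4) \<le> ?s * (\<bar>t\<bar> * sqrt (apex_coeff\<^sup>2 + (\<gamma> / ?s)\<^sup>2))"
    using a norm_evol_z1_le[of t] apex s_inv by (intro mult_left_mono) auto
  also have "\<dots> \<le> ?s * (\<bar>t\<bar> * (2 * \<bar>\<gamma>\<bar> / ?s))"
    using R by (intro mult_left_mono) auto
  also have "\<dots> = 2 * \<bar>\<gamma> * t\<bar>"
    using n_pos by (simp add: abs_mult)
  finally show ?thesis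
    by (simp add: eps1_eq[OF w_less])
qed

end

theorem theorem3:
  fixes E :: "nat \<Rightarrow> nat \<Rightarrow> nat \<Rightarrow> bool" and d :: "nat \<Rightarrow> nat"
    and t0 \<gamma> :: "nat \<Rightarrow> real" and \<zeta> :: "nat \<Rightarrow> complex" and w :: "nat \<Rightarrow> nat"
  assumes "\<forall>n\<ge>1. regular_graph n (d n) (E n)"
    and "(\<lambda>n. sqrt (real n)) \<in> o(\<lambda>n. real (d n))"
    and "\<forall>n\<ge>1. w n < n"
    and "\<forall>n. norm (\<zeta> n) = 1"
    and "(\<lambda>n. l2norm_sq (\<lambda>u. evol (ham (E n) n (\<gamma> n) (w n)) (t0 n) (z1 n) u
                                - \<zeta> n * basis (w n) u)) \<in> o(\<lambda>n. 1)"
    and "(\<lambda>n. 1 / (\<gamma> n * eps1 n (w n))) \<in> o(\<lambda>n. 1)"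
  shows "(\<lambda>n. \<gamma> n * t0 n) \<in> \<Omega>(\<lambda>n. 1 / eps1 n (w n))"
proof (rule landau_omega.bigI[of "1 / 8"])
  have "\<forall>\<^sub>F n in at_top. \<bar>1 / (\<gamma> n * eps1 n (w n))\<bar> \<le> 1"
    using landau_o.smallD[OF assms(6), of 1] by simp
  moreover have "\<forall>\<^sub>F n in at_top. sqrt (real n) \<le> 1 / 4 * real (d n)"
    using landau_o.smallD[OF assms(2), of "1 / 4"] by simp
  moreover have "\<forall>\<^sub>F n in at_top. l2norm_sq (\<lambda>u. evol (ham (E n) n (\<gamma> n) (w n)) (t0 n) (z1 n) u
      - \<zeta> n * basis (w n) u) \<le> 1 / 16"
    using landau_o.smallD[OF assms(5), of "1 / 16"] by (auto elim!: eventually_mono)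
  moreover have "\<forall>\<^sub>F n in at_top. 16 \<le> (n :: nat)"
    by (rule eventually_ge_at_top)
  ultimately show "\<forall>\<^sub>F n in at_top. 1 / 8 * norm (1 / eps1 n (w n)) \<le> norm (\<gamma> n * t0 n)"
  proof eventually_elim
    case (elim n)
    interpret cone_over_regular_graph "E n" n "d n" "\<gamma> n" "w n"
      using assms(1,3) elim(4) by unfold_locales auto
    show ?case
      by (rule gamma_time_lower_bound) (use elim assms(4) in auto)
  qed
qed simp

end
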